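(* Let $Z$ be a real random variable such that for some $\theta>0$, $\Pr[|Z-\mathbb E[Z]|\ge\xi]\le 2e^{-\xi^2\theta^2/2}$ for all $\xi\ge0$. Then for every $\kappa>0$, $$\Pr[Z\ge\mathbb E[Z]]\ge\frac{\theta^2\operatorname{Var}[Z]}{2\kappa^2}-2e^{-\kappa^2/2}\left(1+\sqrt2+\frac{\sqrt{2\pi}}{\kappa}+\frac1{\kappa^2}\right).$$ *)

theory Defs
  imports "HOL-Probability.Probability"
begin

end

theory Submission
  imports Defs "HOL-Real_Asymp.Real_Asymp"
begin

(* Put D = Z - E[Z] and a = kappa / theta. As E[D] = 0, Var[Z] = E[D^2 + a D], and pointwise
     D^2 + a D <= 2 a^2 [D >= 0] + (D^2 + 2 a |D|) [|D| >= a].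
   The first term contributes 2 a^2 Pr[Z >= E[Z]]. By the layer-cake formula the expectation of
   the second is 3 a^2 Pr[|D| >= a] + int_a^oo (2t + 2a) Pr[|D| >= t] dt, which the sub-Gaussian
   tail bound makes O(exp(-kappa^2/2)): on [a, oo) the Gaussian exp(-theta^2 t^2/2) is dominated
   by exp(1/2 - kappa^2/2 - theta (t - a)). Dividing by 2 a^2 gives the claim. *)

lemma sq_add_mult_le_split:
  fixes a d :: real
  assumes "a > 0"
  shows "d\<^sup>2 + a * d \<le> 2 * a\<^sup>2 * of_bool (0 \<le> d) + (d\<^sup>2 + 2 * a * \<bar>d\<bar>) * of_bool (a \<le> \<bar>d\<bar>)"
proof (cases "a \<le> \<bar>d\<bar>")
  case True
  have "a * d \<le> 2 * a * \<bar>d\<bar>"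
    using assms by (simp add: abs_ge_self order_trans mult_left_mono)
  then show ?thesis
    using True assms mult_pos_neg[of a d] by auto
next
  case False
  consider "0 \<le> d" | "d < 0"
    by linarith
  then have "d * (d + a) \<le> 2 * a\<^sup>2 * of_bool (0 \<le> d)"
  proof cases
    case 1
    then have "d * (d + a) \<le> a * (a + a)"
      using False by (intro mult_mono) auto
    then show ?thesis
      using 1 by (simp add: power2_eq_square)
  next
    case 2
    then show ?thesis
      using False by (simp add: mult_nonpos_nonneg)
  qed
  then show ?thesis
    using False by (simp add: power2_eq_square algebra_simps)
qed

lemma nn_integral_FTC_atLeastAtMost:
  fixes \<phi> \<phi>' :: "real \<Rightarrow> real"
  assumes "a \<le> b"
    and "\<And>t. a \<le> t \<Longrightarrow> (\<phi> has_real_derivative \<phi>' t) (at t)"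
    and "\<And>t. a \<le> t \<Longrightarrow> 0 \<le> \<phi>' t"
  shows "(\<integral>\<^sup>+t. ennreal (\<phi>' t) * indicator {a..b} t \<partial>lborel) = ennreal (\<phi> b - \<phi> a)"
proof -
  have "(\<phi>' has_integral \<phi> b - \<phi> a) {a..b}"
    using assms by (intro fundamental_theorem_of_calculus)
      (auto intro: has_field_derivative_at_within simp: has_real_derivative_iff_has_vector_derivative[symmetric])
  then show ?thesis
    using assms(3) by (intro nn_integral_has_integral_lebesgue') auto
qed

lemma nn_integral_layer_cake:
  fixes X :: "'a \<Rightarrow> real" and \<phi> \<phi>' :: "real \<Rightarrow> real"
  assumes "sigma_finite_measure M" "X \<in> borel_measurable M" "\<phi>' \<in> borel_measurable borel"
    and "\<And>t. a \<le> t \<Longrightarrow> (\<phi> has_real_derivative \<phi>' t) (at t)"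
    and "\<And>t. a \<le> t \<Longrightarrow> 0 \<le> \<phi>' t"
  shows "(\<integral>\<^sup>+x. ennreal (\<phi> (X x) - \<phi> a) * indicator {x. a \<le> X x} x \<partial>M)
       = (\<integral>\<^sup>+t. ennreal (\<phi>' t) * indicator {a..} t * emeasure M {x \<in> space M. t \<le> X x} \<partial>lborel)"
proof -
  interpret pair_sigma_finite M lborel
    using assms(1) by (intro pair_sigma_finite.intro) (auto intro: lborel.sigma_finite_measure_axioms)
  note [measurable] = assms(2,3)
  have "(\<integral>\<^sup>+x. ennreal (\<phi> (X x) - \<phi> a) * indicator {x. a \<le> X x} x \<partial>M)
      = (\<integral>\<^sup>+x. \<integral>\<^sup>+t. ennreal (\<phi>' t) * indicator {a..X x} t \<partial>lborel \<partial>M)"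
  proof (intro nn_integral_cong)
    fix x
    show "ennreal (\<phi> (X x) - \<phi> a) * indicator {x. a \<le> X x} x
        = (\<integral>\<^sup>+t. ennreal (\<phi>' t) * indicator {a..X x} t \<partial>lborel)"
    proof (cases "a \<le> X x")
      case True
      then show ?thesis
        using nn_integral_FTC_atLeastAtMost[OF True assms(4,5)] by simp
    qed simp
  qed
  also have "\<dots> = (\<integral>\<^sup>+t. \<integral>\<^sup>+x. ennreal (\<phi>' t) * indicator {a..X x} t \<partial>M \<partial>lborel)"
    by (rule Fubini'[symmetric]) (simp add: indicator_def)
  also have "\<dots> = (\<integral>\<^sup>+t. ennreal (\<phi>' t) * indicator {a..} t * emeasure M {x \<in> space M. t \<le> X x} \<partial>lborel)"
  proof (intro nn_integral_cong)
    fix t :: real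
    have "(\<integral>\<^sup>+x. ennreal (\<phi>' t) * indicator {a..X x} t \<partial>M)
        = (\<integral>\<^sup>+x. (ennreal (\<phi>' t) * indicator {a..} t) * indicator {x \<in> space M. t \<le> X x} x \<partial>M)"
      by (intro nn_integral_cong) (auto simp: indicator_def)
    also have "\<dots> = ennreal (\<phi>' t) * indicator {a..} t * emeasure M {x \<in> space M. t \<le> X x}"
      by (intro nn_integral_cmult_indicator) measurable
    finally show "(\<integral>\<^sup>+x. ennreal (\<phi>' t) * indicator {a..X x} t \<partial>M)
        = ennreal (\<phi>' t) * indicator {a..} t * emeasure M {x \<in> space M. t \<le> X x}" .
  qed
  finally show ?thesis .
qed

lemma exp_neg_sq_half_le:
  fixes u v :: real
  assumes "0 \<le> u" "u \<le> v"
  shows "exp (- v\<^sup>2 / 2) \<le> exp (1 / 2) * exp (- u\<^sup>2 / 2) * exp (- (v - u))"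
proof -
  have "0 \<le> (v - u - 1)\<^sup>2 + 2 * u * (v - u)"
    using assms by simp
  then have "- v\<^sup>2 / 2 \<le> 1 / 2 + - u\<^sup>2 / 2 + - (v - u)"
    by (simp add: power2_eq_square algebra_simps)
  then show ?thesis
    by (simp add: exp_add[symmetric])
qed

lemma nn_integral_gaussian_tail_moment:
  fixes a \<theta> :: real
  assumes "0 \<le> a" "0 < \<theta>"
  shows "(\<integral>\<^sup>+t. ennreal (t * exp (- (t\<^sup>2 * \<theta>\<^sup>2) / 2)) * indicator {a..} t \<partial>lborel)
       = ennreal (exp (- (a\<^sup>2 * \<theta>\<^sup>2) / 2) / \<theta>\<^sup>2)"
proof -
  let ?F = "\<lambda>t. - exp (- (t\<^sup>2 * \<theta>\<^sup>2) / 2) / \<theta>\<^sup>2"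
  have "(\<integral>\<^sup>+t. ennreal (t * exp (- (t\<^sup>2 * \<theta>\<^sup>2) / 2)) * indicator {a..} t \<partial>lborel) = 0 - ?F a"
  proof (rule nn_integral_FTC_atLeast[where F = ?F])
    fix t assume "a \<le> t"
    then show "0 \<le> t * exp (- (t\<^sup>2 * \<theta>\<^sup>2) / 2)"
      using assms by simp
    show "(?F has_real_derivative t * exp (- (t\<^sup>2 * \<theta>\<^sup>2) / 2)) (at t)"
      using assms by (auto intro!: derivative_eq_intros simp: field_simps power2_eq_square)
  next
    show "(?F \<longlongrightarrow> 0) at_top"
      using assms by real_asymp
  qed measurable
  then show ?thesis
    by simp
qed

lemma nn_integral_exp_tail:
  fixes a \<theta> :: real
  assumes "0 < \<theta>"
  shows "(\<integral>\<^sup>+t. ennreal (exp (- \<theta> * (t - a))) * indicator {a..} t \<partial>lborel) = ennreal (1 / \<theta>)"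
proof -
  let ?F = "\<lambda>t. - exp (- \<theta> * (t - a)) / \<theta>"
  have "(\<integral>\<^sup>+t. ennreal (exp (- \<theta> * (t - a))) * indicator {a..} t \<partial>lborel) = 0 - ?F a"
  proof (rule nn_integral_FTC_atLeast[where F = ?F])
    fix t
    show "(?F has_real_derivative exp (- \<theta> * (t - a))) (at t)"
      using assms by (auto intro!: derivative_eq_intros)
  next
    show "(?F \<longlongrightarrow> 0) at_top"
      using assms by real_asymp
  qed auto
  then show ?thesis
    by simp
qed

lemma gaussian_tail_weight_integral_le:
  fixes a \<theta> :: real
  assumes "0 < a" "0 < \<theta>"
  defines "E \<equiv> exp (- (a\<^sup>2 * \<theta>\<^sup>2) / 2)"
  shows "(\<integral>\<^sup>+t. ennreal ((2 * t + 2 * a) * (2 * exp (- (t\<^sup>2 * \<theta>\<^sup>2) / 2))) * indicator {a..} t \<partial>lborel)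
       \<le> ennreal (4 * E / \<theta>\<^sup>2 + 4 * a * exp (1 / 2) * E / \<theta>)"
proof -
  define C where "C = 4 * a * exp (1 / 2) * E"
  have "C \<ge> 0"
    using assms by (simp add: C_def E_def)
  have "(\<integral>\<^sup>+t. ennreal ((2 * t + 2 * a) * (2 * exp (- (t\<^sup>2 * \<theta>\<^sup>2) / 2))) * indicator {a..} t \<partial>lborel)
      \<le> (\<integral>\<^sup>+t. 4 * (ennreal (t * exp (- (t\<^sup>2 * \<theta>\<^sup>2) / 2)) * indicator {a..} t)
             + ennreal C * (ennreal (exp (- \<theta> * (t - a))) * indicator {a..} t) \<partial>lborel)"
  proof (intro nn_integral_mono)
    fix t :: real
    show "ennreal ((2 * t + 2 * a) * (2 * exp (- (t\<^sup>2 * \<theta>\<^sup>2) / 2))) * indicator {a..} t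
        \<le> 4 * (ennreal (t * exp (- (t\<^sup>2 * \<theta>\<^sup>2) / 2)) * indicator {a..} t)
          + ennreal C * (ennreal (exp (- \<theta> * (t - a))) * indicator {a..} t)"
    proof (cases "a \<le> t")
      case True
      have "exp (- (t\<^sup>2 * \<theta>\<^sup>2) / 2) \<le> exp (1 / 2) * E * exp (- \<theta> * (t - a))"
        using exp_neg_sq_half_le[of "a * \<theta>" "t * \<theta>"] True assms
        by (simp add: E_def algebra_simps mult_right_mono)
      then have "(2 * t + 2 * a) * (2 * exp (- (t\<^sup>2 * \<theta>\<^sup>2) / 2))
          \<le> 4 * (t * exp (- (t\<^sup>2 * \<theta>\<^sup>2) / 2)) + C * exp (- \<theta> * (t - a))"
        using assms by (simp add: C_def algebra_simps)
      then have "ennreal ((2 * t + 2 * a) * (2 * exp (- (t\<^sup>2 * \<theta>\<^sup>2) / 2)))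
          \<le> ennreal (4 * (t * exp (- (t\<^sup>2 * \<theta>\<^sup>2) / 2)) + C * exp (- \<theta> * (t - a)))"
        by (rule ennreal_leI)
      also have "\<dots> = 4 * ennreal (t * exp (- (t\<^sup>2 * \<theta>\<^sup>2) / 2)) + ennreal C * ennreal (exp (- \<theta> * (t - a)))"
        using True assms \<open>C \<ge> 0\<close> by (simp add: ennreal_mult)
      finally show ?thesis
        using True by simp
    qed simp
  qed
  also have "\<dots> = 4 * (\<integral>\<^sup>+t. ennreal (t * exp (- (t\<^sup>2 * \<theta>\<^sup>2) / 2)) * indicator {a..} t \<partial>lborel)
      + ennreal C * (\<integral>\<^sup>+t. ennreal (exp (- \<theta> * (t - a))) * indicator {a..} t \<partial>lborel)"
    by (simp add: nn_integral_add nn_integral_cmult)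
  also have "\<dots> = 4 * ennreal (E / \<theta>\<^sup>2) + ennreal C * ennreal (1 / \<theta>)"
    using assms unfolding E_def by (simp only: nn_integral_gaussian_tail_moment nn_integral_exp_tail less_imp_le)
  also have "\<dots> = ennreal (4 * (E / \<theta>\<^sup>2) + C * (1 / \<theta>))"
    using assms \<open>C \<ge> 0\<close> ennreal_mult'[of 4 "E / \<theta>\<^sup>2"] ennreal_mult'[of C "1 / \<theta>"]
    by (simp add: E_def)
  also have "\<dots> = ennreal (4 * E / \<theta>\<^sup>2 + 4 * a * exp (1 / 2) * E / \<theta>)"
    by (simp add: C_def)
  finally show ?thesis .
qed

lemma subgaussian_truncated_moment_le:
  fixes D :: "'a \<Rightarrow> real" and a \<theta> :: real
  assumes "prob_space M" "D \<in> borel_measurable M" "0 < a" "0 < \<theta>"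
    and tail: "\<And>t. 0 \<le> t \<Longrightarrow> measure M {x \<in> space M. t \<le> \<bar>D x\<bar>} \<le> 2 * exp (- (t\<^sup>2 * \<theta>\<^sup>2) / 2)"
  defines "E \<equiv> exp (- (a\<^sup>2 * \<theta>\<^sup>2) / 2)"
  shows "(\<integral>x. ((D x)\<^sup>2 + 2 * a * \<bar>D x\<bar>) * indicator {x. a \<le> \<bar>D x\<bar>} x \<partial>M)
       \<le> 6 * a\<^sup>2 * E + (4 * E / \<theta>\<^sup>2 + 4 * a * exp (1 / 2) * E / \<theta>)"
proof -
  interpret prob_space M
    by fact
  note [measurable] = assms(2)
  define \<phi> where "\<phi> = (\<lambda>s::real. s\<^sup>2 + 2 * a * s)"
  have [measurable]: "\<phi> \<in> borel_measurable borel"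
    unfolding \<phi>_def by measurable
  define B where "B = 4 * E / \<theta>\<^sup>2 + 4 * a * exp (1 / 2) * E / \<theta>"
  have "E > 0" "B \<ge> 0"
    using assms by (simp_all add: E_def B_def)
  have \<phi>_mono: "\<phi> a \<le> \<phi> s" if "a \<le> s" for s
  proof -
    have "a * a \<le> s * s" "2 * a * a \<le> 2 * a * s"
      using that assms(3) by (intro mult_mono mult_left_mono; simp)+
    then show ?thesis
      by (simp add: \<phi>_def power2_eq_square)
  qed
  have layer_cake: "(\<integral>\<^sup>+x. ennreal (\<phi> \<bar>D x\<bar> - \<phi> a) * indicator {x. a \<le> \<bar>D x\<bar>} x \<partial>M)
      = (\<integral>\<^sup>+t. ennreal (2 * t + 2 * a) * indicator {a..} t * emeasure M {x \<in> space M. t \<le> \<bar>D x\<bar>} \<partial>lborel)"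
    unfolding \<phi>_def using assms(3) sigma_finite_measure_axioms
    by (intro nn_integral_layer_cake[where X = "\<lambda>x. \<bar>D x\<bar>"]) (auto intro!: derivative_eq_intros)
  have tail_ennreal: "emeasure M {x \<in> space M. t \<le> \<bar>D x\<bar>} \<le> ennreal (2 * exp (- (t\<^sup>2 * \<theta>\<^sup>2) / 2))"
    if "0 \<le> t" for t
    using tail[OF that] by (simp add: emeasure_eq_measure)
  have tail_at_a: "emeasure M {x \<in> space M. a \<le> \<bar>D x\<bar>} \<le> ennreal (2 * E)"
    using tail[of a] assms by (simp add: emeasure_eq_measure E_def)
  have "(\<integral>\<^sup>+x. ennreal (((D x)\<^sup>2 + 2 * a * \<bar>D x\<bar>) * indicator {x. a \<le> \<bar>D x\<bar>} x) \<partial>M)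
      = (\<integral>\<^sup>+x. ennreal (3 * a\<^sup>2) * indicator {x \<in> space M. a \<le> \<bar>D x\<bar>} x
           + ennreal (\<phi> \<bar>D x\<bar> - \<phi> a) * indicator {x. a \<le> \<bar>D x\<bar>} x \<partial>M)"
  proof (intro nn_integral_cong)
    fix x assume "x \<in> space M"
    then show "ennreal (((D x)\<^sup>2 + 2 * a * \<bar>D x\<bar>) * indicator {x. a \<le> \<bar>D x\<bar>} x)
        = ennreal (3 * a\<^sup>2) * indicator {x \<in> space M. a \<le> \<bar>D x\<bar>} x
          + ennreal (\<phi> \<bar>D x\<bar> - \<phi> a) * indicator {x. a \<le> \<bar>D x\<bar>} x"
      using \<phi>_mono[of "\<bar>D x\<bar>"] assms(3)
      by (auto simp: indicator_def \<phi>_def power2_eq_square ennreal_plus[symmetric] simp del: ennreal_plus)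
  qed
  also have "\<dots> = ennreal (3 * a\<^sup>2) * emeasure M {x \<in> space M. a \<le> \<bar>D x\<bar>}
      + (\<integral>\<^sup>+t. ennreal (2 * t + 2 * a) * indicator {a..} t * emeasure M {x \<in> space M. t \<le> \<bar>D x\<bar>} \<partial>lborel)"
    by (subst nn_integral_add) (auto simp: nn_integral_cmult_indicator layer_cake)
  also have "\<dots> \<le> ennreal (3 * a\<^sup>2) * ennreal (2 * E)
      + (\<integral>\<^sup>+t. ennreal ((2 * t + 2 * a) * (2 * exp (- (t\<^sup>2 * \<theta>\<^sup>2) / 2))) * indicator {a..} t \<partial>lborel)"
  proof (intro add_mono mult_left_mono nn_integral_mono)
    fix t :: real
    show "ennreal (2 * t + 2 * a) * indicator {a..} t * emeasure M {x \<in> space M. t \<le> \<bar>D x\<bar>}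
        \<le> ennreal ((2 * t + 2 * a) * (2 * exp (- (t\<^sup>2 * \<theta>\<^sup>2) / 2))) * indicator {a..} t"
    proof (cases "a \<le> t")
      case True
      then show ?thesis
        using tail_ennreal[of t] assms(3) by (simp add: ennreal_mult mult_left_mono)
    qed simp
  qed (use tail_at_a in simp_all)
  also have "\<dots> \<le> ennreal (3 * a\<^sup>2) * ennreal (2 * E) + ennreal B"
    using gaussian_tail_weight_integral_le[OF assms(3,4)] by (simp add: B_def E_def add_left_mono)
  also have "\<dots> = ennreal (6 * a\<^sup>2 * E + B)"
    using \<open>E > 0\<close> \<open>B \<ge> 0\<close> by (simp add: ennreal_mult[symmetric])
  finally have "(\<integral>\<^sup>+x. ennreal (((D x)\<^sup>2 + 2 * a * \<bar>D x\<bar>) * indicator {x. a \<le> \<bar>D x\<bar>} x) \<partial>M)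
      \<le> ennreal (6 * a\<^sup>2 * E + B)" .
  then show ?thesis
    using \<open>E > 0\<close> \<open>B \<ge> 0\<close> assms(3) unfolding B_def
    by (subst integral_eq_nn_integral) (auto intro!: enn2real_leI)
qed

lemma second_moment_le_split:
  fixes D :: "'a \<Rightarrow> real" and a :: real
  assumes "prob_space M" "integrable M D" "integrable M (\<lambda>x. (D x)\<^sup>2)" "(\<integral>x. D x \<partial>M) = 0" "0 < a"
  shows "(\<integral>x. (D x)\<^sup>2 \<partial>M)
       \<le> 2 * a\<^sup>2 * measure M {x \<in> space M. 0 \<le> D x}
         + (\<integral>x. ((D x)\<^sup>2 + 2 * a * \<bar>D x\<bar>) * indicator {x. a \<le> \<bar>D x\<bar>} x \<partial>M)"
proof -
  interpret prob_space M
    by fact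
  have [measurable]: "D \<in> borel_measurable M"
    using assms(2) by blast
  let ?g = "\<lambda>x. ((D x)\<^sup>2 + 2 * a * \<bar>D x\<bar>) * indicator {x. a \<le> \<bar>D x\<bar>} x"
  have "integrable M ?g"
  proof (rule Bochner_Integration.integrable_bound[OF integrable_mult_right[OF assms(3), of 3]])
    show "AE x in M. norm (?g x) \<le> norm (3 * (D x)\<^sup>2)"
    proof (intro AE_I2)
      fix x
      have "2 * a * \<bar>D x\<bar> \<le> 2 * \<bar>D x\<bar> * \<bar>D x\<bar>" if "a \<le> \<bar>D x\<bar>"
        using that assms(5) by (simp add: mult_right_mono)
      then show "norm (?g x) \<le> norm (3 * (D x)\<^sup>2)"
        using assms(5) by (simp add: indicator_def power2_eq_square)
    qed
  qed measurable
  have integrable_bound: "integrable M (\<lambda>x. 2 * a\<^sup>2 * indicator {x \<in> space M. 0 \<le> D x} x + ?g x)"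
    using \<open>integrable M ?g\<close>
    by (intro Bochner_Integration.integrable_add integrable_mult_right integrable_real_indicator)
      (auto simp: emeasure_eq_measure)
  have "(\<integral>x. (D x)\<^sup>2 \<partial>M) = (\<integral>x. (D x)\<^sup>2 + a * D x \<partial>M)"
    using assms(2-4) by simp
  also have "\<dots> \<le> (\<integral>x. 2 * a\<^sup>2 * indicator {x \<in> space M. 0 \<le> D x} x + ?g x \<partial>M)"
  proof (rule integral_mono)
    fix x assume "x \<in> space M"
    then show "(D x)\<^sup>2 + a * D x \<le> 2 * a\<^sup>2 * indicator {x \<in> space M. 0 \<le> D x} x + ?g x"
      using sq_add_mult_le_split[OF assms(5), of "D x"] by (simp add: indicator_def)
  qed (use assms(2,3) integrable_bound in auto)
  also have "\<dots> = 2 * a\<^sup>2 * measure M {x \<in> space M. 0 \<le> D x} + (\<integral>x. ?g x \<partial>M)"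
    using \<open>integrable M ?g\<close>
    by (subst Bochner_Integration.integral_add) (auto simp: emeasure_eq_measure)
  finally show ?thesis .
qed

lemma subgaussian_variance_le:
  fixes Z :: "'a \<Rightarrow> real" and a \<theta> :: real
  assumes "prob_space M" "integrable M Z" "0 < a" "0 < \<theta>"
    and "\<And>t. 0 \<le> t \<Longrightarrow>
           measure M {x \<in> space M. t \<le> \<bar>Z x - (\<integral>y. Z y \<partial>M)\<bar>} \<le> 2 * exp (- (t\<^sup>2 * \<theta>\<^sup>2) / 2)"
  defines "E \<equiv> exp (- (a\<^sup>2 * \<theta>\<^sup>2) / 2)"
  shows "(\<integral>y. (Z y - (\<integral>z. Z z \<partial>M))\<^sup>2 \<partial>M)
       \<le> 2 * a\<^sup>2 * measure M {x \<in> space M. (\<integral>y. Z y \<partial>M) \<le> Z x}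
         + (6 * a\<^sup>2 * E + (4 * E / \<theta>\<^sup>2 + 4 * a * exp (1 / 2) * E / \<theta>))"
proof -
  interpret prob_space M
    by fact
  define D where "D = (\<lambda>x. Z x - (\<integral>y. Z y \<partial>M))"
  have "integrable M D" "(\<integral>x. D x \<partial>M) = 0"
    using assms(2) by (simp_all add: D_def prob_space)
  have bound_nonneg: "0 \<le> 2 * a\<^sup>2 * measure M {x \<in> space M. (\<integral>y. Z y \<partial>M) \<le> Z x}
         + (6 * a\<^sup>2 * E + (4 * E / \<theta>\<^sup>2 + 4 * a * exp (1 / 2) * E / \<theta>))"
    using assms(3,4) by (simp add: E_def)
  show ?thesis
  proof (cases "integrable M (\<lambda>x. (D x)\<^sup>2)")
    case True
    have "{x \<in> space M. 0 \<le> D x} = {x \<in> space M. (\<integral>y. Z y \<partial>M) \<le> Z x}"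
      by (auto simp: D_def)
    then show ?thesis
      using second_moment_le_split[OF assms(1) \<open>integrable M D\<close> True \<open>(\<integral>x. D x \<partial>M) = 0\<close> assms(3)]
        subgaussian_truncated_moment_le[OF assms(1) _ assms(3,4), of D] assms(5) \<open>integrable M D\<close>
      by (simp add: D_def E_def)
  next
    case False
    then show ?thesis
      using bound_nonneg by (simp add: D_def not_integrable_integral_eq)
  qed
qed

lemma exp_half_constant_le:
  fixes \<kappa> :: real
  assumes "0 < \<kappa>"
  shows "3 + 2 / \<kappa>\<^sup>2 + 2 * exp (1 / 2) / \<kappa> \<le> 2 * (1 + sqrt 2 + sqrt (2 * pi) / \<kappa> + 1 / \<kappa>\<^sup>2)"
proof -
  have "2 \<le> sqrt (2 * pi)"
    using pi_gt3 by (intro real_le_rsqrt) simp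
  then have "2 * exp (1 / 2) / \<kappa> \<le> 2 * sqrt (2 * pi) / \<kappa>"
    using exp_half_le2 assms by (intro divide_right_mono) auto
  moreover have "1 \<le> sqrt 2"
    by simp
  moreover have "2 * (1 + sqrt 2 + sqrt (2 * pi) / \<kappa> + 1 / \<kappa>\<^sup>2)
      = 2 + 2 * sqrt 2 + 2 * sqrt (2 * pi) / \<kappa> + 2 / \<kappa>\<^sup>2"
    by (simp add: algebra_simps)
  ultimately show ?thesis
    by linarith
qed

theorem corollary3:
  fixes M :: "'a measure" and Z :: "'a \<Rightarrow> real" and \<theta> \<kappa> :: real
  assumes "prob_space M"
    and "Z \<in> borel_measurable M"
    and "integrable M Z"
    and "\<theta> > 0"
    and "\<And>\<xi>. \<xi> \<ge> 0 \<Longrightarrow>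
           measure M {x \<in> space M. \<bar>Z x - (\<integral>y. Z y \<partial>M)\<bar> \<ge> \<xi>} \<le> 2 * exp (- (\<xi>\<^sup>2 * \<theta>\<^sup>2) / 2)"
    and "\<kappa> > 0"
  shows "measure M {x \<in> space M. Z x \<ge> (\<integral>y. Z y \<partial>M)}
         \<ge> \<theta>\<^sup>2 * (\<integral>y. (Z y - (\<integral>z. Z z \<partial>M))\<^sup>2 \<partial>M) / (2 * \<kappa>\<^sup>2)
           - 2 * exp (- (\<kappa>\<^sup>2) / 2) * (1 + sqrt 2 + sqrt (2 * pi) / \<kappa> + 1 / \<kappa>\<^sup>2)"
proof -
  define V where "V = (\<integral>y. (Z y - (\<integral>z. Z z \<partial>M))\<^sup>2 \<partial>M)"
  define p where "p = measure M {x \<in> space M. Z x \<ge> (\<integral>y. Z y \<partial>M)}"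
  define E where "E = exp (- (\<kappa>\<^sup>2) / 2)"
  have "(\<kappa> / \<theta>)\<^sup>2 * \<theta>\<^sup>2 = \<kappa>\<^sup>2"
    using assms(4) by (simp add: power_divide)
  then have "V \<le> 2 * (\<kappa> / \<theta>)\<^sup>2 * p + (6 * (\<kappa> / \<theta>)\<^sup>2 * E + (4 * E / \<theta>\<^sup>2 + 4 * (\<kappa> / \<theta>) * exp (1 / 2) * E / \<theta>))"
    using subgaussian_variance_le[OF assms(1,3) _ assms(4), of "\<kappa> / \<theta>"] assms(4-6)
    by (simp add: V_def p_def E_def)
  then have "\<theta>\<^sup>2 * V / (2 * \<kappa>\<^sup>2) \<le> p + E * (3 + 2 / \<kappa>\<^sup>2 + 2 * exp (1 / 2) / \<kappa>)"
    using assms(4,6) by (simp add: field_simps power2_eq_square)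
  also have "\<dots> \<le> p + E * (2 * (1 + sqrt 2 + sqrt (2 * pi) / \<kappa> + 1 / \<kappa>\<^sup>2))"
    using exp_half_constant_le[OF assms(6)] by (simp add: E_def)
  finally show ?thesis
    by (simp add: V_def p_def E_def algebra_simps)
qed

end
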